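(* Let $(X,\mathcal{A})$ be a measurable space, $f,g\in\mathcal{F}_{[0,1]}^{(X,\mathcal{A})}$ comonotone, and $\star:[0,1]^2\to[0,1]$ continuous, non-decreasing in both arguments and bounded from above by the minimum ($a\star b\le\min(a,b)$). Then for every monotone measure $m$ on $(X,\mathcal{A})$ with $m(X)=1$ and all $\alpha,\beta,\gamma,\lambda,\upsilon,\tau\in(0,\infty)$ with $0<\alpha\lambda\le1$, $\beta\upsilon\ge1$, $\gamma\tau\ge1$, $\lambda\le\tau$ and $\lambda\le\upsilon$, \[ \big[\mathbf{Su}(m,(f\star g)^{\alpha})\big]^{\lambda}\ \ge\ \big[\mathbf{Su}(m,f^{\beta})\big]^{\upsilon}\star\big[\mathbf{Su}(m,g^{\gamma})\big]^{\tau}. \]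
   Context: A monotone measure on $(X,\mathcal{A})$ is $m:\mathcal{A}\to[0,\infty]$ with $m(\emptyset)=0$, $m(X)>0$, $m(A)\le m(B)$ for $A\subseteq B$. $\mathcal{F}_{[0,1]}^{(X,\mathcal{A})}$ is the set of $\mathcal{A}$-measurable $f:X\to[0,1]$. The Sugeno integral is $\mathbf{Su}(m,f)=\sup\{\min(t,m(\{f\ge t\})) : t\in(0,\infty]\}$. $f,g$ are comonotone if $(f(x)-f(y))(g(x)-g(y))\ge0$ for all $x,y$. Operations on functions are pointwise. *)

theory Defs
  imports "HOL-Analysis.Analysis"
begin

definition monotone_measure :: "'a measure \<Rightarrow> ('a set \<Rightarrow> ennreal) \<Rightarrow> bool" where
  "monotone_measure M m \<longleftrightarrow> m {} = 0 \<and> m (space M) > 0 \<and>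
     (\<forall>A\<in>sets M. \<forall>B\<in>sets M. A \<subseteq> B \<longrightarrow> m A \<le> m B)"

definition unit_funs :: "'a measure \<Rightarrow> ('a \<Rightarrow> real) set" where
  "unit_funs M = {f. f \<in> borel_measurable M \<and> (\<forall>x\<in>space M. 0 \<le> f x \<and> f x \<le> 1)}"

definition sugeno :: "'a measure \<Rightarrow> ('a set \<Rightarrow> ennreal) \<Rightarrow> ('a \<Rightarrow> real) \<Rightarrow> ennreal" where
  "sugeno M m f = (SUP t\<in>{0<..}. min t (m {x\<in>space M. t \<le> ennreal (f x)}))"

definition comonotone :: "'a measure \<Rightarrow> ('a \<Rightarrow> real) \<Rightarrow> ('a \<Rightarrow> real) \<Rightarrow> bool" where
  "comonotone M f g \<longleftrightarrow> (\<forall>x\<in>space M. \<forall>y\<in>space M. (f x - f y) * (g x - g y) \<ge> 0)"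

end

theory Submission
  imports Defs
begin

text \<open>For \<open>c < Su(m, f\<^sup>\<beta>)\<close> and \<open>d < Su(m, g\<^sup>\<gamma>)\<close> the level sets \<open>{f\<^sup>\<beta> \<ge> c}\<close> and
  \<open>{g\<^sup>\<gamma> \<ge> d}\<close> have measure at least \<open>c\<close> and \<open>d\<close>; comonotonicity makes them nested, so their
  intersection has measure at least \<open>min c d\<close>. On it \<open>f \<star> g \<ge> c\<^bsup>1/\<beta>\<^esup> \<star> d\<^bsup>1/\<gamma>\<^esup>\<close>, which bounds
  \<open>Su(m, (f \<star> g)\<^sup>\<alpha>)\<close> from below; the exponent constraints and \<open>\<star> \<le> min\<close> turn this into
  \<open>c\<^sup>\<upsilon> \<star> d\<^sup>\<tau> \<le> Su(m, (f \<star> g)\<^sup>\<alpha>)\<^sup>\<lambda>\<close>. Continuity of \<open>\<star>\<close> lets \<open>c\<close> and \<open>d\<close> tend to the two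
  integrals.\<close>

lemma monotone_measure_mono:
  assumes "monotone_measure M m" "A \<in> sets M" "B \<in> sets M" "A \<subseteq> B"
  shows "m A \<le> m B"
  using assms unfolding monotone_measure_def by blast

lemma sugeno_le_bound:
  assumes "m {} = 0" and "\<forall>x\<in>space M. h x \<le> b"
  shows "sugeno M m h \<le> ennreal b"
  unfolding sugeno_def
proof (rule SUP_least)
  fix t :: ennreal
  show "min t (m {x\<in>space M. t \<le> ennreal (h x)}) \<le> ennreal b"
  proof (cases "t \<le> ennreal b")
    case False
    then have "{x\<in>space M. t \<le> ennreal (h x)} = {}"
      using assms(2) by (auto dest: ennreal_leI intro: order_trans)
    then have "m {x\<in>space M. t \<le> ennreal (h x)} = 0"
      using assms(1) by (simp only:)
    then show ?thesis by simp
  qed (simp add: min.coboundedI1)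
qed

lemma sugeno_powr_le_one:
  assumes "monotone_measure M m" and "f \<in> unit_funs M" and "0 \<le> e"
  shows "sugeno M m (\<lambda>x. f x powr e) \<le> 1"
proof -
  have "m {} = 0"
    using assms(1) unfolding monotone_measure_def by simp
  moreover have "\<forall>x\<in>space M. f x powr e \<le> 1"
    using assms(2,3) unfolding unit_funs_def by (auto intro: powr_le1)
  ultimately show ?thesis
    by (rule sugeno_le_bound[where b = 1, simplified])
qed

lemma le_enn2real_sugeno_powr:
  assumes "monotone_measure M m" and "f \<in> unit_funs M" and "0 \<le> e"
    and "0 \<le> q" and "ennreal q \<le> sugeno M m (\<lambda>x. f x powr e)"
  shows "q \<le> enn2real (sugeno M m (\<lambda>x. f x powr e))"
proof -
  have "sugeno M m (\<lambda>x. f x powr e) < top"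
    using sugeno_powr_le_one[OF assms(1-3)] by (rule order.strict_trans1) simp
  then show ?thesis
    using enn2real_mono[OF assms(5)] assms(4) by simp
qed

lemma min_le_sugeno:
  assumes "monotone_measure M m" and h: "h \<in> borel_measurable M"
    and "S \<in> sets M" and "0 \<le> t" and "\<forall>x\<in>S. t \<le> h x"
  shows "min (ennreal t) (m S) \<le> sugeno M m h"
proof (cases "t = 0")
  case False
  have "S \<subseteq> {x\<in>space M. ennreal t \<le> ennreal (h x)}"
    using assms(3,5) sets.sets_into_space by (auto intro: ennreal_leI)
  moreover have "{x\<in>space M. ennreal t \<le> ennreal (h x)} \<in> sets M"
    using h by measurable
  ultimately have "min (ennreal t) (m S) \<le> min (ennreal t) (m {x\<in>space M. ennreal t \<le> ennreal (h x)})"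
    using assms(1,3) by (intro min.mono order_refl monotone_measure_mono)
  also have "\<dots> \<le> sugeno M m h"
    unfolding sugeno_def by (rule SUP_upper) (use False assms(4) in simp)
  finally show ?thesis .
qed simp

lemma measure_level_set_ge_if_less_sugeno:
  assumes "monotone_measure M m" and h: "h \<in> borel_measurable M"
    and "0 < c" and "ennreal c < sugeno M m h"
  shows "ennreal c \<le> m {x\<in>space M. c \<le> h x}"
proof -
  obtain t where ct: "ennreal c < min t (m {x\<in>space M. t \<le> ennreal (h x)})"
    using assms(4) unfolding sugeno_def less_SUP_iff by auto
  have "{x\<in>space M. t \<le> ennreal (h x)} \<subseteq> {x\<in>space M. c \<le> h x}"
  proof safe
    fix x assume "t \<le> ennreal (h x)"
    moreover have "ennreal c < t" using ct by simp
    ultimately have "ennreal c < ennreal (h x)" by simp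
    then show "c \<le> h x" using \<open>0 < c\<close> by (simp add: ennreal_less_iff)
  qed
  moreover have "{x\<in>space M. t \<le> ennreal (h x)} \<in> sets M"
    using h by measurable
  moreover have "{x\<in>space M. c \<le> h x} \<in> sets M"
    using h by measurable
  ultimately have "m {x\<in>space M. t \<le> ennreal (h x)} \<le> m {x\<in>space M. c \<le> h x}"
    using assms(1) by (intro monotone_measure_mono)
  moreover have "ennreal c \<le> m {x\<in>space M. t \<le> ennreal (h x)}"
    using ct by (simp add: less_imp_le)
  ultimately show ?thesis by (rule order.trans[rotated])
qed

lemma comonotone_compose:
  assumes "comonotone M f g" and "mono_on S \<phi>" and "mono_on T \<psi>"
    and "\<forall>x\<in>space M. f x \<in> S" and "\<forall>x\<in>space M. g x \<in> T"
  shows "comonotone M (\<lambda>x. \<phi> (f x)) (\<lambda>x. \<psi> (g x))"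
  unfolding comonotone_def
proof (intro ballI)
  fix x y assume x: "x \<in> space M" and y: "y \<in> space M"
  have "0 \<le> (f x - f y) * (g x - g y)"
    using assms(1) x y unfolding comonotone_def by blast
  then have "f x \<le> f y \<and> g x \<le> g y \<or> f y \<le> f x \<and> g y \<le> g x"
    by (auto simp: zero_le_mult_iff)
  then show "0 \<le> (\<phi> (f x) - \<phi> (f y)) * (\<psi> (g x) - \<psi> (g y))"
  proof (elim disjE conjE)
    assume "f x \<le> f y" "g x \<le> g y"
    then have "\<phi> (f x) \<le> \<phi> (f y)" "\<psi> (g x) \<le> \<psi> (g y)"
      using assms(2-5) x y by (auto intro: mono_onD)
    then show ?thesis by (intro mult_nonpos_nonpos) auto
  next
    assume "f y \<le> f x" "g y \<le> g x"
    then have "\<phi> (f y) \<le> \<phi> (f x)" "\<psi> (g y) \<le> \<psi> (g x)"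
      using assms(2-5) x y by (auto intro: mono_onD)
    then show ?thesis by (intro mult_nonneg_nonneg) auto
  qed
qed

lemma comonotone_level_sets_nested:
  assumes "comonotone M F G"
  shows "{x\<in>space M. c \<le> F x} \<subseteq> {x\<in>space M. d \<le> G x} \<or>
         {x\<in>space M. d \<le> G x} \<subseteq> {x\<in>space M. c \<le> F x}"
proof (rule ccontr)
  assume "\<not> ?thesis"
  then obtain x y where "x \<in> space M" "c \<le> F x" "\<not> d \<le> G x"
    and "y \<in> space M" "d \<le> G y" "\<not> c \<le> F y"
    by blast
  moreover from this have "(F x - F y) * (G x - G y) < 0"
    by (intro mult_pos_neg) (auto simp: not_le)
  ultimately show False using assms unfolding comonotone_def by force
qed

lemma min_le_sugeno_if_comonotone:
  assumes mm: "monotone_measure M m" and "comonotone M F G"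
    and [measurable]: "F \<in> borel_measurable M" "G \<in> borel_measurable M" "h \<in> borel_measurable M"
    and c: "0 < c" "ennreal c < sugeno M m F" and d: "0 < d" "ennreal d < sugeno M m G"
    and "0 \<le> t" and ht: "\<And>x. x \<in> space M \<Longrightarrow> c \<le> F x \<Longrightarrow> d \<le> G x \<Longrightarrow> t \<le> h x"
  shows "ennreal (min t (min c d)) \<le> sugeno M m h"
proof -
  define A where "A = {x\<in>space M. c \<le> F x}"
  define B where "B = {x\<in>space M. d \<le> G x}"
  have [measurable]: "A \<in> sets M" "B \<in> sets M"
    unfolding A_def B_def by measurable
  have mA: "ennreal c \<le> m A" and mB: "ennreal d \<le> m B"
    unfolding A_def B_def using mm c d by (auto intro!: measure_level_set_ge_if_less_sugeno)
  from \<open>comonotone M F G\<close> have "A \<subseteq> B \<or> B \<subseteq> A"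
    unfolding A_def B_def by (rule comonotone_level_sets_nested)
  then have "min (ennreal c) (ennreal d) \<le> m (A \<inter> B)"
  proof
    assume "A \<subseteq> B"
    then show ?thesis using mA by (simp add: Int_absorb2 min.coboundedI1)
  next
    assume "B \<subseteq> A"
    then show ?thesis using mB by (simp add: Int_absorb1 min.coboundedI2)
  qed
  then have "ennreal (min t (min c d)) \<le> min (ennreal t) (m (A \<inter> B))"
    using min.mono[OF order_refl, of _ _ "ennreal t"] c(1) d(1) \<open>0 \<le> t\<close>
    by (simp add: min_ennreal[symmetric])
  also have "\<dots> \<le> sugeno M m h"
    using mm \<open>0 \<le> t\<close> ht unfolding A_def B_def by (intro min_le_sugeno) auto
  finally show ?thesis .
qed

lemma borel_measurable_continuous_on_comp:
  assumes "continuous_on S \<phi>" and "h \<in> borel_measurable M" and "\<forall>x\<in>space M. h x \<in> S"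
  shows "(\<lambda>x. \<phi> (h x)) \<in> borel_measurable M"
  using measurable_comp[OF measurable_restrict_space2[OF _ assms(2)]
      borel_measurable_continuous_on_restrict[OF assms(1)]] assms(3)
  by (simp add: comp_def Pi_iff)

lemma le_at_corner_if_le_on_box:
  fixes \<phi> :: "real \<times> real \<Rightarrow> real"
  assumes "continuous_on ({0..1} \<times> {0..1}) \<phi>" and "0 < p" "p \<le> 1" "0 < q" "q \<le> 1"
    and "\<And>a b. 0 < a \<Longrightarrow> a < p \<Longrightarrow> 0 < b \<Longrightarrow> b < q \<Longrightarrow> \<phi> (a, b) \<le> L"
  shows "\<phi> (p, q) \<le> L"
proof -
  let ?K = "{z \<in> {0..1} \<times> {0..1}. \<phi> z \<le> L}"
  have "closed ?K"
    by (intro continuous_on_closed_Collect_le assms(1) continuous_on_const closed_Times) auto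
  moreover have "{0<..<p} \<times> {0<..<q} \<subseteq> ?K"
    using assms by auto
  ultimately have "closure ({0<..<p} \<times> {0<..<q}) \<subseteq> ?K"
    by (rule closure_minimal[rotated])
  moreover have "(p, q) \<in> closure ({0<..<p} \<times> {0<..<q})"
    using assms(2,4) by (simp add: closure_Times)
  ultimately show ?thesis by blast
qed

lemma powr_min:
  fixes a b :: real
  assumes "0 \<le> a" "0 \<le> b" "0 \<le> p"
  shows "min a b powr p = min (a powr p) (b powr p)"
  using assms powr_mono2[of p a b] powr_mono2[of p b a] by (auto simp: min_def)

lemma powr_inverse_less_if_less_powr:
  fixes c x e :: real
  assumes "0 \<le> c" "0 \<le> x" "0 < e" "c < x powr e"
  shows "c powr (1/e) < x"
proof -
  have "c powr (1/e) < (x powr e) powr (1/e)"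
    using assms by (intro powr_less_mono2) auto
  also have "\<dots> = x"
    using assms by (simp add: powr_powr)
  finally show ?thesis .
qed

lemma powr_inverse_le_if_le_powr:
  fixes c x e :: real
  assumes "0 \<le> c" "0 \<le> x" "0 < e" "c \<le> x powr e"
  shows "c powr (1/e) \<le> x"
proof -
  have "c powr (1/e) \<le> (x powr e) powr (1/e)"
    using assms by (intro powr_mono2) auto
  also have "\<dots> = x"
    using assms by (simp add: powr_powr)
  finally show ?thesis .
qed

locale min_bounded_operation =
  fixes star :: "real \<Rightarrow> real \<Rightarrow> real"
  assumes star_range: "\<And>a b. a \<in> {0..1} \<Longrightarrow> b \<in> {0..1} \<Longrightarrow> star a b \<in> {0..1}"
    and star_mono: "\<And>a a' b b'. a \<in> {0..1} \<Longrightarrow> a' \<in> {0..1} \<Longrightarrow> b \<in> {0..1} \<Longrightarrow> b' \<in> {0..1} \<Longrightarrow>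
      a \<le> a' \<Longrightarrow> b \<le> b' \<Longrightarrow> star a b \<le> star a' b'"
    and star_le_min: "\<And>a b. a \<in> {0..1} \<Longrightarrow> b \<in> {0..1} \<Longrightarrow> star a b \<le> min a b"
begin

lemma star_powr_le_powr_min:
  assumes c: "0 < c" "c \<le> 1" and d: "0 < d" "d \<le> 1"
    and "0 < be" "0 < ga" "1 \<le> be * ups" "1 \<le> ga * tau"
    and "al * la \<le> 1" "0 \<le> la" "la \<le> ups" "la \<le> tau"
  shows "star (c powr ups) (d powr tau) \<le>
         min (star (c powr (1/be)) (d powr (1/ga)) powr al) (min c d) powr la"
proof -
  define z where "z = star (c powr ups) (d powr tau)"
  define w where "w = star (c powr (1/be)) (d powr (1/ga))"
  have "0 < be * ups" "0 < ga * tau"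
    using assms(7,8) by linarith+
  then have "0 < ups" "0 < tau"
    using assms(5,6) zero_less_mult_pos by blast+
  then have unit: "c powr ups \<in> {0..1}" "d powr tau \<in> {0..1}"
    "c powr (1/be) \<in> {0..1}" "d powr (1/ga) \<in> {0..1}"
    using assms(1-6) by (auto intro: powr_le1)
  have "c powr ups \<le> c powr (1/be)" "d powr tau \<le> d powr (1/ga)"
    using assms by (auto intro!: powr_mono' simp: field_simps)
  then have "z \<le> w"
    unfolding z_def w_def using unit by (intro star_mono)
  have "0 \<le> w" "w \<le> 1"
    unfolding w_def using star_range unit(3,4) by auto
  then have "w \<le> (w powr al) powr la"
    using powr_mono'[of "al * la" 1 w] assms(9) by (simp add: powr_powr)
  moreover have "z \<le> c powr la" "z \<le> d powr la"
    using star_le_min[OF unit(1,2)] powr_mono'[of la ups c] powr_mono'[of la tau d] c d assms(11,12)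
    unfolding z_def by auto
  ultimately have "z \<le> min ((w powr al) powr la) (min (c powr la) (d powr la))"
    using \<open>z \<le> w\<close> by auto
  also have "\<dots> = min (w powr al) (min c d) powr la"
    using c d \<open>0 \<le> la\<close> by (simp add: powr_min)
  finally show ?thesis unfolding z_def w_def .
qed

lemma star_powr_le_sugeno_if_below:
  assumes f: "f \<in> unit_funs M" and g: "g \<in> unit_funs M" and "comonotone M f g"
    and mm: "monotone_measure M m"
    and H: "(\<lambda>x. star (f x) (g x)) \<in> borel_measurable M"
    and "0 \<le> al" "0 < be" "0 < ga" "1 \<le> be * ups" "1 \<le> ga * tau"
    and "al * la \<le> 1" "0 \<le> la" "la \<le> ups" "la \<le> tau"
    and c: "0 < c" "ennreal c < sugeno M m (\<lambda>x. f x powr be)"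
    and d: "0 < d" "ennreal d < sugeno M m (\<lambda>x. g x powr ga)"
  shows "star (c powr ups) (d powr tau) \<le>
         enn2real (sugeno M m (\<lambda>x. star (f x) (g x) powr al)) powr la"
proof -
  have f01: "\<forall>x\<in>space M. f x \<in> {0..1}" and g01: "\<forall>x\<in>space M. g x \<in> {0..1}"
    using f g unfolding unit_funs_def by auto
  have "sugeno M m (\<lambda>x. f x powr be) \<le> 1" "sugeno M m (\<lambda>x. g x powr ga) \<le> 1"
    using sugeno_powr_le_one[OF mm] f g \<open>0 < be\<close> \<open>0 < ga\<close> by simp_all
  then have "ennreal c < 1" "ennreal d < 1"
    using c(2) d(2) by (blast intro: order.strict_trans2)+
  then have "c \<le> 1" "d \<le> 1"
    by simp_all
  have powr_mono_on: "mono_on {0..} (\<lambda>t::real. t powr e)" if "0 < e" for e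
    using that by (intro mono_onI powr_mono2) auto
  have powr_comonotone: "comonotone M (\<lambda>x. f x powr be) (\<lambda>x. g x powr ga)"
    using comonotone_compose[OF assms(3) powr_mono_on[OF \<open>0 < be\<close>] powr_mono_on[OF \<open>0 < ga\<close>]]
      f01 g01 by auto
  have unit: "c powr (1/be) \<in> {0..1}" "d powr (1/ga) \<in> {0..1}"
    using \<open>c \<le> 1\<close> \<open>d \<le> 1\<close> c(1) d(1) \<open>0 < be\<close> \<open>0 < ga\<close> by (auto intro: powr_le1)
  define w where "w = star (c powr (1/be)) (d powr (1/ga))"
  have "0 \<le> w"
    unfolding w_def using star_range[OF unit] by simp
  have "ennreal (min (w powr al) (min c d)) \<le> sugeno M m (\<lambda>x. star (f x) (g x) powr al)"
  proof (rule min_le_sugeno_if_comonotone[OF mm powr_comonotone _ _ _ c d])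
    fix x assume x: "x \<in> space M" "c \<le> f x powr be" "d \<le> g x powr ga"
    have "c powr (1/be) \<le> f x" "d powr (1/ga) \<le> g x"
      using x f01 g01 c(1) d(1) \<open>0 < be\<close> \<open>0 < ga\<close> by (auto intro!: powr_inverse_le_if_le_powr)
    then have "w \<le> star (f x) (g x)"
      unfolding w_def using unit f01 g01 x(1) by (intro star_mono) auto
    then show "w powr al \<le> star (f x) (g x) powr al"
      using \<open>0 \<le> w\<close> \<open>0 \<le> al\<close> by (intro powr_mono2)
  qed (use f g H \<open>0 \<le> w\<close> in \<open>auto simp: unit_funs_def\<close>)
  moreover have "(\<lambda>x. star (f x) (g x)) \<in> unit_funs M"
    using H star_range f01 g01 unfolding unit_funs_def by simp
  ultimately have "min (w powr al) (min c d) \<le> enn2real (sugeno M m (\<lambda>x. star (f x) (g x) powr al))"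
    using \<open>0 \<le> w\<close> c(1) d(1) \<open>0 \<le> al\<close> by (intro le_enn2real_sugeno_powr[OF mm]) auto
  then have "min (w powr al) (min c d) powr la \<le>
      enn2real (sugeno M m (\<lambda>x. star (f x) (g x) powr al)) powr la"
    using \<open>0 \<le> w\<close> c(1) d(1) \<open>0 \<le> la\<close> by (intro powr_mono2) auto
  moreover have "star (c powr ups) (d powr tau) \<le> min (w powr al) (min c d) powr la"
    unfolding w_def using c(1) \<open>c \<le> 1\<close> d(1) \<open>d \<le> 1\<close> assms(7-14)
    by (rule star_powr_le_powr_min)
  ultimately show ?thesis by linarith
qed

lemma star_sugeno_powr_le:
  assumes f: "f \<in> unit_funs M" and g: "g \<in> unit_funs M" and "comonotone M f g"
    and cont: "continuous_on ({0..1} \<times> {0..1}) (\<lambda>(a, b). star a b)"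
    and mm: "monotone_measure M m"
    and H: "(\<lambda>x. star (f x) (g x)) \<in> borel_measurable M"
    and "0 \<le> al" "0 < be" "0 < ga" "1 \<le> be * ups" "1 \<le> ga * tau"
    and "al * la \<le> 1" "0 \<le> la" "la \<le> ups" "la \<le> tau"
  shows "star (enn2real (sugeno M m (\<lambda>x. f x powr be)) powr ups)
              (enn2real (sugeno M m (\<lambda>x. g x powr ga)) powr tau) \<le>
         enn2real (sugeno M m (\<lambda>x. star (f x) (g x) powr al)) powr la"
proof -
  have "0 < be * ups" "0 < ga * tau"
    using assms(10,11) by linarith+
  then have "0 < ups" "0 < tau"
    using assms(8,9) zero_less_mult_pos by blast+
  define u where "u = enn2real (sugeno M m (\<lambda>x. f x powr be))"
  define v where "v = enn2real (sugeno M m (\<lambda>x. g x powr ga))"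
  define L where "L = enn2real (sugeno M m (\<lambda>x. star (f x) (g x) powr al)) powr la"
  have "sugeno M m (\<lambda>x. f x powr be) \<le> 1" "sugeno M m (\<lambda>x. g x powr ga) \<le> 1"
    using sugeno_powr_le_one[OF mm] f g \<open>0 < be\<close> \<open>0 < ga\<close> by simp_all
  then have u: "sugeno M m (\<lambda>x. f x powr be) = ennreal u" "0 \<le> u" "u \<le> 1"
    and v: "sugeno M m (\<lambda>x. g x powr ga) = ennreal v" "0 \<le> v" "v \<le> 1"
    unfolding u_def v_def by (auto simp: ennreal_enn2real_if enn2real_leI top_unique)
  have "star (u powr ups) (v powr tau) \<le> L"
  proof (cases "u = 0 \<or> v = 0")
    case True
    then have "star (u powr ups) (v powr tau) \<le> 0"
      using star_le_min[of "u powr ups" "v powr tau"] u(2,3) v(2,3) \<open>0 < ups\<close> \<open>0 < tau\<close>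
      by (auto simp: powr_le1)
    then show ?thesis
      unfolding L_def by (rule order.trans) simp
  next
    case False
    then have "0 < u" "0 < v"
      using u(2) v(2) by auto
    then have corner: "0 < u powr ups" "u powr ups \<le> 1" "0 < v powr tau" "v powr tau \<le> 1"
      using u(3) v(3) \<open>0 < ups\<close> \<open>0 < tau\<close> by (simp_all add: powr_le1)
    show ?thesis
    proof (rule le_at_corner_if_le_on_box[OF cont corner, where L = L, simplified])
      fix a b assume a: "0 < a" "a < u powr ups" and b: "0 < b" "b < v powr tau"
      define c where "c = a powr (1/ups)"
      define d where "d = b powr (1/tau)"
      have "0 < c" "c < u" "0 < d" "d < v"
        unfolding c_def d_def using a b u(2) v(2) \<open>0 < ups\<close> \<open>0 < tau\<close>
        by (simp_all add: powr_inverse_less_if_less_powr)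
      then have "star (c powr ups) (d powr tau) \<le> L"
        unfolding L_def using \<open>0 < u\<close> \<open>0 < v\<close>
        by (intro star_powr_le_sugeno_if_below[OF f g assms(3) mm H assms(7-15)])
          (simp_all add: u(1) v(1) ennreal_lessI)
      moreover have "c powr ups = a" "d powr tau = b"
        unfolding c_def d_def using a(1) b(1) \<open>0 < ups\<close> \<open>0 < tau\<close> by (simp_all add: powr_powr)
      ultimately show "star a b \<le> L" by simp
    qed
  qed
  then show ?thesis unfolding u_def v_def L_def .
qed

end

theorem corollary3p18:
  fixes M :: "'a measure" and f g :: "'a \<Rightarrow> real" and star :: "real \<Rightarrow> real \<Rightarrow> real"
    and m :: "'a set \<Rightarrow> ennreal"
    and al be ga la ups tau :: real
  assumes "f \<in> unit_funs M" and "g \<in> unit_funs M" and "comonotone M f g"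
    and "continuous_on ({0..1} \<times> {0..1}) (\<lambda>(a, b). star a b)"
    and "\<forall>a\<in>{0..1}. \<forall>b\<in>{0..1}. star a b \<in> {0..1}"
    and "\<forall>a\<in>{0..1}. \<forall>a'\<in>{0..1}. \<forall>b\<in>{0..1}. \<forall>b'\<in>{0..1}.
           a \<le> a' \<longrightarrow> b \<le> b' \<longrightarrow> star a b \<le> star a' b'"
    and "\<forall>a\<in>{0..1}. \<forall>b\<in>{0..1}. star a b \<le> min a b"
    and "monotone_measure M m" and "m (space M) = 1"
    and "al > 0" "be > 0" "ga > 0" "la > 0" "ups > 0" "tau > 0"
    and "al * la \<le> 1" and "be * ups \<ge> 1" and "ga * tau \<ge> 1"
    and "la \<le> tau" and "la \<le> ups"
  shows "enn2real (sugeno M m (\<lambda>x. (star (f x) (g x)) powr al)) powr la \<ge>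
         star (enn2real (sugeno M m (\<lambda>x. f x powr be)) powr ups)
              (enn2real (sugeno M m (\<lambda>x. g x powr ga)) powr tau)"
proof -
  interpret min_bounded_operation star
    using assms(5-7) by unfold_locales blast+
  have [measurable]: "f \<in> borel_measurable M" "g \<in> borel_measurable M"
    and range: "\<forall>x\<in>space M. (f x, g x) \<in> {0..1} \<times> {0..1}"
    using assms(1,2) unfolding unit_funs_def by auto
  have "(\<lambda>x. (f x, g x)) \<in> borel_measurable M"
    by measurable
  then have "(\<lambda>x. star (f x) (g x)) \<in> borel_measurable M"
    using borel_measurable_continuous_on_comp[OF assms(4) _ range] by simp
  then show ?thesis
    by (rule star_sugeno_powr_le[OF assms(1-4,8)]) (use assms(10-20) in auto)
qed

end
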